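(* Let $f$ be a ternary form of degree $d$ over $\mathbb{C}$. Then $f$ lies in the closure (in the space of ternary forms of degree $d$) of the set of forms which can be written as $\alpha(x,y)+\beta(z)$ in some linear coordinates $(x,y,z)$ if and only if $f$ can be written either as $\alpha(x,y)+\beta(z)$ or as $\alpha(x,y)+\beta(x)z$ in some linear coordinates (with $\alpha,\beta$ forms).
   Context: "Written in some linear coordinates" means after a change of variables by an element of $GL(3,\mathbb{C})$. *)

theory Defs
  imports "HOL-Analysis.Analysis"
begin

text \<open>A ternary form of degree d over C is represented by its coefficient function on
exponent triples (i,j,k), supported on the monomials with i+j+k = d.  The ambient
space of such coefficient functions carries the product topology, which on the
(closed, finite-dimensional) subspace of forms of degree d is the Euclidean topology.\<close>

definition tmonos :: "nat \<Rightarrow> (nat \<times> nat \<times> nat) set" where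
  "tmonos d = {(i,j,k). i + j + k = d}"

definition is_form :: "nat \<Rightarrow> (nat \<times> nat \<times> nat \<Rightarrow> complex) \<Rightarrow> bool" where
  "is_form d c \<longleftrightarrow> (\<forall>m. m \<notin> tmonos d \<longrightarrow> c m = 0)"

definition form_eval :: "nat \<Rightarrow> (nat \<times> nat \<times> nat \<Rightarrow> complex) \<Rightarrow> complex^3 \<Rightarrow> complex" where
  "form_eval d c v = (\<Sum>m\<in>tmonos d. c m * (v$1) ^ fst m * (v$2) ^ fst (snd m) * (v$3) ^ snd (snd m))"

definition binform :: "nat \<Rightarrow> (nat \<Rightarrow> complex) \<Rightarrow> complex^3 \<Rightarrow> complex" where
  "binform d a v = (\<Sum>i\<le>d. a i * (v$1) ^ i * (v$2) ^ (d - i))"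

definition split_form :: "nat \<Rightarrow> (nat \<times> nat \<times> nat \<Rightarrow> complex) \<Rightarrow> bool" where
  "split_form d c \<longleftrightarrow> (\<exists>A :: complex^3^3. invertible A \<and>
      (\<exists>a b. \<forall>v. form_eval d c (A *v v) = binform d a v + b * (v$3) ^ d))"

definition degen_form :: "nat \<Rightarrow> (nat \<times> nat \<times> nat \<Rightarrow> complex) \<Rightarrow> bool" where
  "degen_form d c \<longleftrightarrow> (\<exists>A :: complex^3^3. invertible A \<and>
      (\<exists>a b. (d = 0 \<longrightarrow> b = 0) \<and>
         (\<forall>v. form_eval d c (A *v v) = binform d a v + b * (v$1) ^ (d - 1) * v$3)))"

end

theory Submission
  imports Defs
begin

(*
  A form F of degree d is split exactly when there are a direction u \<noteq> 0, a linear form l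
  and a scalar \<beta> with F(w + s u) - F(w) = \<beta> ((l (w + s u))^d - (l w)^d) for all w, s: in
  coordinates whose z-axis is u, F - \<beta> l^d does not depend on z.  Such a difference factors
  as \<sigma> Q(l w, s, l u), where Q(a, s, t) = ((a + s t)^d - a^d) / t is a polynomial in t.

  Let split forms g_n tend to f.  By compactness we may take normalised u_n, l_n converging
  to U, L.  The factors \<sigma>_n cannot be unbounded, because Q(-, 1, L U) does not vanish
  identically; so along a subsequence \<sigma>_n \<rightarrow> \<mu>, and f(w + s U) - f(w) = \<mu> Q(L w, s, L U).
  If L U \<noteq> 0 this is again the law of a split form.  If L U = 0 it reads
  f(w + s U) = f(w) + d \<mu> s (L w)^(d-1), i.e. f = \<alpha>(x,y) + \<beta> x^(d-1) z in suitable coordinates.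

  Conversely \<alpha>(x,y) + b x^(d-1) z is the limit, as \<epsilon> \<rightarrow> 0, of the split forms
  \<alpha>(x,y) + b/(d \<epsilon>) ((x + \<epsilon> z)^d - x^d), whose coefficients are polynomials in \<epsilon>.
*)

lemma closure_if_continuous_punctured:
  fixes \<phi> :: "'a::perfect_space \<Rightarrow> 'b::topological_space"
  assumes "continuous_on UNIV \<phi>" "\<And>x. x \<noteq> a \<Longrightarrow> \<phi> x \<in> S"
  shows "\<phi> a \<in> closure S"
proof (rule Lim_in_closed_set[OF closed_closure _ at_neq_bot])
  show "(\<phi> \<longlongrightarrow> \<phi> a) (at a)"
    using assms(1) by (simp add: continuous_on_def)
  show "eventually (\<lambda>x. \<phi> x \<in> closure S) (at a)"
    unfolding eventually_at_filter by (rule always_eventually) (use assms(2) closure_subset in blast)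
qed

lemma not_tendsto_infinity_convergent_subseq:
  fixes x :: "nat \<Rightarrow> 'a::{real_normed_vector, heine_borel}"
  assumes "\<not> filterlim x at_infinity sequentially"
  obtains r c where "strict_mono r" "(x \<circ> r) \<longlonglongrightarrow> c"
proof -
  obtain R where "\<not> eventually (\<lambda>n. R \<le> norm (x n)) sequentially"
    using assms unfolding filterlim_at_infinity[OF order_refl] by blast
  then have "infinite {n. norm (x n) < R}"
    by (auto simp: infinite_nat_iff_unbounded_le eventually_sequentially not_le)
  then have e: "strict_mono (enumerate {n. norm (x n) < R})"
    "\<And>n. norm (x (enumerate {n. norm (x n) < R} n)) < R"
    using strict_mono_enumerate enumerate_in_set by blast+
  have "bounded (range (x \<circ> enumerate {n. norm (x n) < R}))"
    using e(2) by (intro boundedI[of _ R]) (auto intro: less_imp_le)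
  then obtain c r where "strict_mono r" "((x \<circ> enumerate {n. norm (x n) < R}) \<circ> r) \<longlonglongrightarrow> c"
    using bounded_imp_convergent_subsequence by blast
  then show thesis
    using that[OF strict_mono_o[OF e(1)]] by (simp add: comp_assoc)
qed

lemma not_tendsto_infinity_if_product_tendsto:
  fixes \<sigma> q :: "nat \<Rightarrow> 'a::real_normed_field"
  assumes "(\<lambda>n. \<sigma> n * q n) \<longlonglongrightarrow> p" "q \<longlonglongrightarrow> q0" "q0 \<noteq> 0"
  shows "\<not> filterlim \<sigma> at_infinity sequentially"
proof
  assume \<sigma>: "filterlim \<sigma> at_infinity sequentially"
  then have "eventually (\<lambda>n. 1 \<le> norm (\<sigma> n)) sequentially"
    by (simp add: filterlim_at_infinity[OF order_refl])
  then have "eventually (\<lambda>n. \<sigma> n * q n / \<sigma> n = q n) sequentially"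
    by (rule eventually_mono) auto
  then have "q \<longlonglongrightarrow> 0"
    using tendsto_divide_0[OF assms(1) \<sigma>] by (rule Lim_transform_eventually[rotated])
  with assms(2,3) show False using LIMSEQ_unique by blast
qed

lemma of_real_smult_eq_scaleR: "of_real r *s x = r *\<^sub>R (x :: 'a::real_algebra_1^'n)"
  unfolding vec_eq_iff vector_smult_component vector_scaleR_component by (simp add: scaleR_conv_of_real)

lemma tendsto_vector_smult [tendsto_intros]:
  fixes x :: "'b \<Rightarrow> 'a::real_normed_algebra^'n"
  shows "(x \<longlongrightarrow> y) F \<Longrightarrow> ((\<lambda>n. c *s x n) \<longlongrightarrow> c *s y) F"
  by (rule vec_tendstoI) (simp add: tendsto_mult_left tendsto_vec_nth)

section \<open>Divided differences of powers\<close>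

text \<open>\<open>((a + s t)^d - a^d) / t\<close>, written as a polynomial in \<open>t\<close> so that it makes sense
  at \<open>t = 0\<close>.\<close>

definition power_diff_quot :: "nat \<Rightarrow> 'a::comm_ring_1 \<Rightarrow> 'a \<Rightarrow> 'a \<Rightarrow> 'a" where
  "power_diff_quot d a s t = (\<Sum>k=1..d. of_nat (d choose k) * a ^ (d - k) * s ^ k * t ^ (k - 1))"

lemma power_diff_quot_mult: "t * power_diff_quot d a s t = (a + s * t) ^ d - a ^ d"
proof -
  have "(s * t + a) ^ d = (\<Sum>k\<in>insert 0 {1..d}. of_nat (d choose k) * (s * t) ^ k * a ^ (d - k))"
    by (subst binomial_ring) (rule sum.cong, auto)
  also have "\<dots> = a ^ d + (\<Sum>k=1..d. of_nat (d choose k) * (s * t) ^ k * a ^ (d - k))"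
    by (subst sum.insert) auto
  also have "(\<Sum>k=1..d. of_nat (d choose k) * (s * t) ^ k * a ^ (d - k)) = t * power_diff_quot d a s t"
    unfolding power_diff_quot_def sum_distrib_left
  proof (rule sum.cong[OF refl])
    fix k :: nat assume "k \<in> {1..d}"
    then have "t ^ k = t * t ^ (k - 1)" by (cases k) auto
    then show "of_nat (d choose k) * (s * t) ^ k * a ^ (d - k)
        = t * (of_nat (d choose k) * a ^ (d - k) * s ^ k * t ^ (k - 1))"
      by (simp add: power_mult_distrib ac_simps)
  qed
  finally show ?thesis by (simp add: add.commute)
qed

lemma power_diff_quot_split:
  assumes "d \<noteq> 0"
  shows "power_diff_quot d a s t = of_nat d * a ^ (d - 1) * s
           + (\<Sum>k=2..d. t ^ (k - 1) * (of_nat (d choose k) * a ^ (d - k) * s ^ k))"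
proof -
  have "{1..d} = insert 1 {2..d}" using assms by auto
  then show ?thesis unfolding power_diff_quot_def by (simp add: ac_simps)
qed

lemma power_diff_quot_0: "d \<noteq> 0 \<Longrightarrow> power_diff_quot d a s 0 = of_nat d * a ^ (d - 1) * s"
  by (simp add: power_diff_quot_split zero_power)

lemma power_diff_quot_nonzero:
  fixes t :: "'a::{idom, ring_char_0}"
  assumes "d \<noteq> 0"
  obtains a where "power_diff_quot d a 1 t \<noteq> 0"
proof (cases "t = 0")
  case True
  then show thesis using assms by (intro that[of 1]) (simp add: power_diff_quot_0)
next
  case False
  have "t * power_diff_quot d 0 1 t = t ^ d" using assms by (simp add: power_diff_quot_mult)
  then show thesis using False by (intro that[of 0]) auto
qed

lemma tendsto_power_diff_quot [tendsto_intros]: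
  fixes a t :: "'b \<Rightarrow> 'a::real_normed_field"
  shows "(a \<longlongrightarrow> a0) F \<Longrightarrow> (t \<longlongrightarrow> t0) F \<Longrightarrow>
    ((\<lambda>n. power_diff_quot d (a n) s (t n)) \<longlongrightarrow> power_diff_quot d a0 s t0) F"
  unfolding power_diff_quot_def by (intro tendsto_intros)

definition form_fun :: "nat \<Rightarrow> (complex^3 \<Rightarrow> complex) \<Rightarrow> bool" where
  "form_fun d F \<longleftrightarrow> (\<exists>c. F = form_eval d c)"

lemma form_fun_form_eval [simp]: "form_fun d (form_eval d c)"
  by (auto simp: form_fun_def)

lemma finite_tmonos [simp]: "finite (tmonos d)"
  by (rule finite_subset[of _ "{..d} \<times> {..d} \<times> {..d}"]) (auto simp: tmonos_def)

lemma form_fun_is_form: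
  assumes "form_fun d F"
  shows "\<exists>c. is_form d c \<and> form_eval d c = F"
proof -
  obtain c where c: "F = form_eval d c" using assms by (auto simp: form_fun_def)
  have "is_form d (\<lambda>m. if m \<in> tmonos d then c m else 0)" by (simp add: is_form_def)
  moreover have "form_eval d (\<lambda>m. if m \<in> tmonos d then c m else 0) = F"
    by (auto simp: c form_eval_def)
  ultimately show ?thesis by blast
qed

lemma form_fun_family_is_form:
  assumes "\<And>k. k \<in> K \<Longrightarrow> form_fun d (F k)"
  shows "\<exists>e. \<forall>k\<in>K. is_form d (e k) \<and> form_eval d (e k) = F k"
  by (rule bchoice, rule ballI, rule form_fun_is_form, rule assms)

lemma form_eval_add: "form_eval d (\<lambda>m. c m + e m) v = form_eval d c v + form_eval d e v"
  by (simp add: form_eval_def sum.distrib distrib_right)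

lemma form_eval_cmult: "form_eval d (\<lambda>m. k * c m) v = k * form_eval d c v"
  by (simp add: form_eval_def sum_distrib_left mult.assoc)

lemma form_eval_sum:
  "finite K \<Longrightarrow> form_eval d (\<lambda>m. \<Sum>k\<in>K. e k m) v = (\<Sum>k\<in>K. form_eval d (e k) v)"
  unfolding form_eval_def by (simp add: mult.assoc sum_distrib_right) (rule sum.swap)

lemma form_fun_add: "form_fun d F \<Longrightarrow> form_fun d G \<Longrightarrow> form_fun d (\<lambda>v. F v + G v)"
  unfolding form_fun_def by (auto simp: fun_eq_iff form_eval_add[symmetric])

lemma form_fun_cmult: "form_fun d F \<Longrightarrow> form_fun d (\<lambda>v. k * F v)"
  unfolding form_fun_def by (auto simp: fun_eq_iff form_eval_cmult[symmetric])

lemma form_fun_zero: "form_fun d (\<lambda>v. 0)"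
  unfolding form_fun_def form_eval_def by (auto intro!: exI[of _ "\<lambda>_. 0"])

lemma form_fun_diff: "form_fun d F \<Longrightarrow> form_fun d G \<Longrightarrow> form_fun d (\<lambda>v. F v - G v)"
  using form_fun_add[of d F "\<lambda>v. (-1) * G v"] form_fun_cmult[of d G "-1"] by simp

lemma form_fun_sum:
  "finite K \<Longrightarrow> (\<And>k. k \<in> K \<Longrightarrow> form_fun d (F k)) \<Longrightarrow> form_fun d (\<lambda>v. \<Sum>k\<in>K. F k v)"
  by (induction K rule: finite_induct) (auto intro: form_fun_add form_fun_zero)

abbreviation monomial :: "nat \<times> nat \<times> nat \<Rightarrow> complex^3 \<Rightarrow> complex" where
  "monomial m v \<equiv> (v$1) ^ fst m * (v$2) ^ fst (snd m) * (v$3) ^ snd (snd m)"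

lemma form_fun_monomial:
  assumes "m \<in> tmonos d"
  shows "form_fun d (monomial m)"
proof -
  have "form_eval d (\<lambda>m'. if m' = m then 1 else 0) = monomial m"
    using assms by (simp add: form_eval_def fun_eq_iff if_distrib[of "\<lambda>x. x * _"] cong: if_cong)
  then show ?thesis unfolding form_fun_def by metis
qed

lemma form_fun_mult:
  assumes "form_fun a F" "form_fun b G"
  shows "form_fun (a + b) (\<lambda>v. F v * G v)"
proof -
  obtain c e where F: "F = form_eval a c" and G: "G = form_eval b e"
    using assms by (auto simp: form_fun_def)
  have "F v * G v = (\<Sum>m\<in>tmonos a. \<Sum>m'\<in>tmonos b. c m * e m' *
           monomial (fst m + fst m', fst (snd m) + fst (snd m'), snd (snd m) + snd (snd m')) v)" for v
    unfolding F G form_eval_def sum_product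
    by (intro sum.cong refl) (simp add: power_add ac_simps)
  moreover have "form_fun (a + b) (\<lambda>v. \<Sum>m\<in>tmonos a. \<Sum>m'\<in>tmonos b. c m * e m' *
           monomial (fst m + fst m', fst (snd m) + fst (snd m'), snd (snd m) + snd (snd m')) v)"
    by (intro form_fun_sum form_fun_cmult form_fun_monomial finite_tmonos)
      (auto simp: tmonos_def)
  ultimately show ?thesis by simp
qed

lemma form_fun_power: "form_fun d F \<Longrightarrow> form_fun (n * d) (\<lambda>v. F v ^ n)"
proof (induction n)
  case 0
  have "form_fun 0 (monomial (0, 0, 0))" by (rule form_fun_monomial) (simp add: tmonos_def)
  then show ?case by simp
next
  case (Suc n)
  then show ?case using form_fun_mult[OF Suc.prems Suc.IH] by (simp add: add.commute)
qed

definition lin_form :: "complex^3 \<Rightarrow> complex^3 \<Rightarrow> complex" where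
  "lin_form l v = (\<Sum>i\<in>UNIV. l$i * v$i)"

lemma lin_form_3: "lin_form l v = l$1 * v$1 + l$2 * v$2 + l$3 * v$3"
  by (simp add: lin_form_def sum_3)

lemma lin_form_add: "lin_form l (v + w) = lin_form l v + lin_form l w"
  by (simp add: lin_form_3 algebra_simps)

lemma lin_form_smult: "lin_form l (s *s v) = s * lin_form l v"
  by (simp add: lin_form_3 algebra_simps)

lemma matrix_vector_mult_nth: "(A *v v) $ i = lin_form (A $ i) v"
  by (simp add: matrix_vector_mult_def lin_form_def)

lemma lin_form_matrix_vector_mult: "lin_form l (A *v v) = lin_form (l v* A) v"
  for A :: "complex^3^3"
  by (simp add: lin_form_3 matrix_vector_mult_def vector_matrix_mult_def sum_3 algebra_simps)

lemma form_fun_lin_form: "form_fun 1 (lin_form l)"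
proof -
  have "form_fun 1 (\<lambda>v. l$1 * monomial (1,0,0) v + l$2 * monomial (0,1,0) v + l$3 * monomial (0,0,1) v)"
    by (intro form_fun_add form_fun_cmult form_fun_monomial) (auto simp: tmonos_def)
  then show ?thesis by (simp add: lin_form_3[abs_def])
qed

lemma form_fun_lin_form_power: "form_fun n (\<lambda>v. lin_form l v ^ n)"
  using form_fun_power[OF form_fun_lin_form, of n l] by simp

lemma form_fun_linear_change:
  assumes "form_fun d F"
  shows "form_fun d (\<lambda>v. F (A *v v))"
proof -
  obtain c where F: "F = form_eval d c" using assms by (auto simp: form_fun_def)
  have "F (A *v v) = (\<Sum>m\<in>tmonos d. c m * (lin_form (A$1) v ^ fst m *
      lin_form (A$2) v ^ fst (snd m) * lin_form (A$3) v ^ snd (snd m)))" for v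
    by (simp add: F form_eval_def matrix_vector_mult_nth mult.assoc)
  moreover have "form_fun d (\<lambda>v. \<Sum>m\<in>tmonos d. c m * (lin_form (A$1) v ^ fst m *
      lin_form (A$2) v ^ fst (snd m) * lin_form (A$3) v ^ snd (snd m)))"
  proof (intro form_fun_sum form_fun_cmult finite_tmonos)
    fix m assume "m \<in> tmonos d"
    then have "d = fst m + fst (snd m) + snd (snd m)" by (auto simp: tmonos_def)
    then show "form_fun d (\<lambda>v. lin_form (A$1) v ^ fst m *
        lin_form (A$2) v ^ fst (snd m) * lin_form (A$3) v ^ snd (snd m))"
      by (simp only: form_fun_mult form_fun_lin_form_power)
  qed
  ultimately show ?thesis by simp
qed

lemma form_fun_restrict_binform:
  assumes "form_fun d F"
  obtains a where "\<And>v. F (vector [v$1, v$2, 0]) = binform d a v"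
proof -
  obtain c where F: "F = form_eval d c" using assms by (auto simp: form_fun_def)
  let ?M = "{m \<in> tmonos d. snd (snd m) = 0}"
  have bij: "bij_betw (\<lambda>i. (i, d - i, 0)) {..d} ?M" by (rule bij_betwI') (auto simp: tmonos_def)
  have "F (vector [v$1, v$2, 0]) = (\<Sum>m\<in>?M. c m * (v$1) ^ fst m * (v$2) ^ fst (snd m))" for v
    unfolding F form_eval_def sum.inter_filter[OF finite_tmonos]
    by (intro sum.cong) (auto simp: zero_power)
  also have "\<dots> v = binform d (\<lambda>i. c (i, d - i, 0)) v" for v
    unfolding binform_def sum.reindex_bij_betw[OF bij, symmetric] by simp
  finally show thesis by (rule that)
qed

definition mat3 :: "complex \<Rightarrow> complex \<Rightarrow> complex \<Rightarrow> complex \<Rightarrow> complex \<Rightarrow> complex \<Rightarrow>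
    complex \<Rightarrow> complex \<Rightarrow> complex \<Rightarrow> complex^3^3" where
  "mat3 a b c d e f g h i = vector [vector [a, b, c], vector [d, e, f], vector [g, h, i]]"

lemma mat3_mult_nth [simp]:
  "(mat3 a b c d e f g h i *v v)$1 = a * v$1 + b * v$2 + c * v$3"
  "(mat3 a b c d e f g h i *v v)$2 = d * v$1 + e * v$2 + f * v$3"
  "(mat3 a b c d e f g h i *v v)$3 = g * v$1 + h * v$2 + i * v$3"
  by (simp_all add: mat3_def matrix_vector_mult_def sum_3)

lemma vec3_eq_iff: "(x::complex^3) = y \<longleftrightarrow> x$1 = y$1 \<and> x$2 = y$2 \<and> x$3 = y$3"
  by (simp add: vec_eq_iff forall_3)

definition e3 :: "complex^3" where
  "e3 = axis 3 1"

lemma e3_nth [simp]: "e3 $ 1 = 0" "e3 $ 2 = 0" "e3 $ 3 = 1"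
  by (simp_all add: e3_def axis_def)

lemma vec3_decompose: "vector [v$1, v$2, 0] + v$3 *s e3 = v"
  by (simp add: vec3_eq_iff)

lemma matrix_vector_mult_add_smult:
  "A *v (v + s *s w) = A *v v + s *s (A *v w)" for A :: "complex^3^3"
  by (simp add: matrix_vector_right_distrib vector_scalar_commute)

lemma invertibleI_right_inverse:
  fixes A B :: "complex^3^3"
  assumes "\<And>v. A *v (B *v v) = v"
  shows "invertible A"
proof -
  have "A ** B = mat 1" unfolding matrix_eq
    using assms by (simp add: matrix_vector_mul_assoc[symmetric])
  then show ?thesis using invertible_right_inverse by blast
qed

lemma exists_invertible_e3_to:
  assumes "u \<noteq> 0"
  obtains A :: "complex^3^3" where "invertible A" "A *v e3 = u"
proof -
  consider "u$3 \<noteq> 0" | "u$3 = 0" "u$2 \<noteq> 0" | "u$3 = 0" "u$2 = 0" "u$1 \<noteq> 0"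
    using assms by (auto simp: vec3_eq_iff)
  then show thesis
  proof cases
    case 1
    have "invertible (mat3 1 0 (u$1) 0 1 (u$2) 0 0 (u$3))"
      by (rule invertibleI_right_inverse[of _ "mat3 1 0 (-u$1/u$3) 0 1 (-u$2/u$3) 0 0 (1/u$3)"])
        (use 1 in \<open>simp add: vec3_eq_iff field_simps\<close>)
    then show thesis by (rule that) (simp add: vec3_eq_iff)
  next
    case 2
    have "invertible (mat3 1 0 (u$1) 0 0 (u$2) 0 1 0)"
      by (rule invertibleI_right_inverse[of _ "mat3 1 (-u$1/u$2) 0 0 0 1 0 (1/u$2) 0"])
        (use 2 in \<open>simp add: vec3_eq_iff field_simps\<close>)
    then show thesis by (rule that) (use 2 in \<open>simp add: vec3_eq_iff\<close>)
  next
    case 3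
    have "invertible (mat3 0 0 (u$1) 1 0 0 0 1 0)"
      by (rule invertibleI_right_inverse[of _ "mat3 0 1 0 0 0 1 (1/u$1) 0 0"])
        (use 3 in \<open>simp add: vec3_eq_iff field_simps\<close>)
    then show thesis by (rule that) (use 3 in \<open>simp add: vec3_eq_iff\<close>)
  qed
qed

lemma exists_invertible_lin_form_to_coord3:
  assumes "l$3 \<noteq> 0"
  obtains A :: "complex^3^3" where "invertible A"
    "\<And>v. (A *v v)$1 = v$1" "\<And>v. (A *v v)$2 = v$2" "\<And>v. lin_form l (A *v v) = v$3"
proof
  show "invertible (mat3 1 0 0 0 1 0 (-l$1/l$3) (-l$2/l$3) (1/l$3))"
    by (rule invertibleI_right_inverse[of _ "mat3 1 0 0 0 1 0 (l$1) (l$2) (l$3)"])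
      (use assms in \<open>simp add: vec3_eq_iff field_simps\<close>)
qed (use assms in \<open>simp_all add: lin_form_3 field_simps\<close>)

lemma exists_invertible_lin_form_to_coord1:
  assumes "l$3 = 0"
  obtains A :: "complex^3^3" and c where "invertible A" "A *v e3 = e3"
    "\<And>v. lin_form l (A *v v) = c * v$1"
proof -
  consider "l$1 \<noteq> 0" | "l$1 = 0" "l$2 \<noteq> 0" | "l$1 = 0" "l$2 = 0" by blast
  then show thesis
  proof cases
    case 1
    have "invertible (mat3 (1/l$1) (-l$2/l$1) 0 0 1 0 0 0 1)"
      by (rule invertibleI_right_inverse[of _ "mat3 (l$1) (l$2) 0 0 1 0 0 0 1"])
        (use 1 in \<open>simp add: vec3_eq_iff field_simps\<close>)
    then show thesis
      by (rule that[where c = 1]) (use 1 assms in \<open>simp_all add: vec3_eq_iff lin_form_3 field_simps\<close>)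
  next
    case 2
    have "invertible (mat3 0 1 0 (1/l$2) 0 0 0 0 1)"
      by (rule invertibleI_right_inverse[of _ "mat3 0 (l$2) 0 1 0 0 0 0 1"])
        (use 2 in \<open>simp add: vec3_eq_iff field_simps\<close>)
    then show thesis
      by (rule that[where c = 1]) (use 2 assms in \<open>simp_all add: vec3_eq_iff lin_form_3 field_simps\<close>)
  next
    case 3
    have "invertible (mat 1 :: complex^3^3)" by (rule invertibleI_right_inverse[of _ "mat 1"]) simp
    then show thesis
      by (rule that[where c = 0]) (use 3 assms in \<open>simp_all add: lin_form_3\<close>)
  qed
qed

section \<open>Split and degenerate forms from translation laws\<close>

lemma binform_cong: "v$1 = w$1 \<Longrightarrow> v$2 = w$2 \<Longrightarrow> binform d a v = binform d a w"
  by (simp add: binform_def)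

lemma translation_invariant_binform:
  assumes "form_fun d G" "\<And>v s. G (v + s *s e3) = G v"
  obtains a where "\<And>v. G v = binform d a v"
proof -
  obtain a where a: "\<And>v. G (vector [v$1, v$2, 0]) = binform d a v"
    using form_fun_restrict_binform[OF assms(1)] by blast
  have "G v = binform d a v" for v
    using assms(2)[of "vector [v$1, v$2, 0]" "v$3"] a[of v] by (simp only: vec3_decompose)
  then show thesis by (rule that)
qed

lemma split_form_if_binform_plus_power:
  assumes "invertible A"
    and f: "\<And>v. form_eval d f (A *v v) = binform d a v + \<beta> * lin_form l v ^ d"
  shows "split_form d f"
proof (cases "l$3 = 0")
  case True
  have "form_fun d (\<lambda>v. form_eval d f (A *v v))" by (intro form_fun_linear_change) simp
  moreover have "form_eval d f (A *v (v + s *s e3)) = form_eval d f (A *v v)" for v s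
  proof -
    have "binform d a (v + s *s e3) = binform d a v" by (rule binform_cong) simp_all
    then show ?thesis using True by (simp add: f lin_form_add lin_form_smult lin_form_3)
  qed
  ultimately obtain a' where "\<And>v. form_eval d f (A *v v) = binform d a' v"
    using translation_invariant_binform by blast
  then have "\<forall>v. form_eval d f (A *v v) = binform d a' v + 0 * (v$3) ^ d" by simp
  then show ?thesis unfolding split_form_def using assms(1) by blast
next
  case False
  obtain C :: "complex^3^3" where C: "invertible C" "\<And>v. (C *v v)$1 = v$1" "\<And>v. (C *v v)$2 = v$2"
    "\<And>v. lin_form l (C *v v) = v$3"
    using exists_invertible_lin_form_to_coord3[OF False] by blast
  have "form_eval d f ((A ** C) *v v) = binform d a v + \<beta> * (v$3) ^ d" for v
  proof -
    have "binform d a (C *v v) = binform d a v" by (rule binform_cong) (simp_all add: C)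
    then show ?thesis using f[of "C *v v"] by (simp add: C matrix_vector_mul_assoc[symmetric])
  qed
  moreover have "invertible (A ** C)" using assms(1) C(1) by (rule invertible_mult)
  ultimately show ?thesis unfolding split_form_def by blast
qed

lemma split_form_if_translation_law:
  assumes "U \<noteq> 0"
    and law: "\<And>w s. form_eval d f (w + s *s U) - form_eval d f w
                   = \<beta> * (lin_form L (w + s *s U) ^ d - lin_form L w ^ d)"
  shows "split_form d f"
proof -
  obtain A where A: "invertible A" "A *v e3 = U"
    using exists_invertible_e3_to[OF assms(1)] by blast
  define \<alpha> where "\<alpha> = (\<lambda>v. form_eval d f (A *v v) - \<beta> * lin_form (L v* A) v ^ d)"
  have "form_fun d \<alpha>" unfolding \<alpha>_def
    by (intro form_fun_diff form_fun_cmult form_fun_lin_form_power form_fun_linear_change) simp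
  moreover have "\<alpha> (v + s *s e3) = \<alpha> v" for v s
  proof -
    have "A *v (v + s *s e3) = A *v v + s *s U" by (simp add: matrix_vector_mult_add_smult A(2))
    then show ?thesis using law[of "A *v v" s]
      by (simp add: \<alpha>_def lin_form_matrix_vector_mult[symmetric] algebra_simps)
  qed
  ultimately obtain a where "\<And>v. \<alpha> v = binform d a v"
    using translation_invariant_binform by blast
  then have "form_eval d f (A *v v) = binform d a v + \<beta> * lin_form (L v* A) v ^ d" for v
    by (simp add: \<alpha>_def algebra_simps)
  then show ?thesis by (rule split_form_if_binform_plus_power[OF A(1)])
qed

lemma degen_form_if_translation_law:
  assumes "d \<noteq> 0" "U \<noteq> 0" "lin_form L U = 0"
    and law: "\<And>w s. form_eval d f (w + s *s U) = form_eval d f w + s * \<mu> * lin_form L w ^ (d - 1)"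
  shows "degen_form d f"
proof -
  obtain A0 where A0: "invertible A0" "A0 *v e3 = U"
    using exists_invertible_e3_to[OF assms(2)] by blast
  have "(L v* A0)$3 = 0"
    using assms(3) A0(2) lin_form_matrix_vector_mult[of L A0 e3] by (simp add: lin_form_3)
  then obtain C :: "complex^3^3" and c where C: "invertible C" "C *v e3 = e3"
    "\<And>v. lin_form (L v* A0) (C *v v) = c * v$1"
    using exists_invertible_lin_form_to_coord1 by blast
  define A where "A = A0 ** C"
  have A: "invertible A" "A *v e3 = U" "\<And>v. lin_form L (A *v v) = c * v$1"
    using invertible_mult[OF A0(1) C(1)] A0(2) C
    by (simp_all add: A_def matrix_vector_mul_assoc[symmetric] lin_form_matrix_vector_mult)
  obtain a where a: "\<And>v. form_eval d f (A *v vector [v$1, v$2, 0]) = binform d a v"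
    using form_fun_restrict_binform[OF form_fun_linear_change[OF form_fun_form_eval]] by blast
  have "form_eval d f (A *v v) = binform d a v + (\<mu> * c ^ (d - 1)) * (v$1) ^ (d - 1) * v$3" for v
  proof -
    let ?p = "vector [v$1, v$2, 0] :: complex^3"
    have "form_eval d f (A *v v) = form_eval d f (A *v ?p + v$3 *s U)"
      by (simp only: matrix_vector_mult_add_smult[symmetric] A(2)[symmetric] vec3_decompose)
    also have "\<dots> = binform d a v + v$3 * \<mu> * (c * v$1) ^ (d - 1)"
      by (simp add: law a A(3))
    finally show ?thesis by (simp add: power_mult_distrib ac_simps)
  qed
  then show ?thesis unfolding degen_form_def using A(1) assms(1) by blast
qed

lemma split_or_degen_if_translation_law:
  assumes "d \<noteq> 0" "U \<noteq> 0"
    and law: "\<And>w s. form_eval d f (w + s *s U) - form_eval d f w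
                = \<mu> * power_diff_quot d (lin_form L w) s (lin_form L U)"
  shows "split_form d f \<or> degen_form d f"
proof (cases "lin_form L U = 0")
  case True
  have "form_eval d f (w + s *s U) = form_eval d f w + s * (\<mu> * of_nat d) * lin_form L w ^ (d - 1)" for w s
    using law[of w s] by (simp add: True power_diff_quot_0[OF assms(1)] algebra_simps)
  then show ?thesis using degen_form_if_translation_law[OF assms(1,2) True] by blast
next
  case False
  have "form_eval d f (w + s *s U) - form_eval d f w
      = \<mu> / lin_form L U * (lin_form L U * power_diff_quot d (lin_form L w) s (lin_form L U))" for w s
    using law[of w s] False by simp
  also have "\<dots> w s = \<mu> / lin_form L U * (lin_form L (w + s *s U) ^ d - lin_form L w ^ d)" for w s
    by (simp add: power_diff_quot_mult lin_form_add lin_form_smult)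
  finally show ?thesis using split_form_if_translation_law[OF assms(2)] by blast
qed

lemma split_form_degree_0: "split_form 0 f"
proof -
  have "invertible (mat 1 :: complex^3^3)" by (rule invertibleI_right_inverse[of _ "mat 1"]) simp
  moreover have "form_eval 0 f (mat 1 *v v) = binform 0 (\<lambda>_. f (0, 0, 0)) v + 0 * (v$3) ^ 0" for v
    by (simp add: form_eval_def binform_def tmonos_def)
  ultimately show ?thesis unfolding split_form_def by blast
qed

section \<open>Limits of split forms\<close>

lemma split_form_translation_law:
  assumes "split_form d g"
  obtains u l \<beta> where "u \<noteq> 0" "l \<noteq> 0"
    "\<And>w s. form_eval d g (w + s *s u) - form_eval d g w
             = \<beta> * (lin_form l (w + s *s u) ^ d - lin_form l w ^ d)"
proof -
  obtain A a b where A: "invertible A"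
    and g: "\<And>v. form_eval d g (A *v v) = binform d a v + b * (v$3) ^ d"
    using assms unfolding split_form_def by blast
  obtain B where "A ** B = mat 1" "B ** A = mat 1" using A unfolding invertible_def by blast
  then have AB: "A *v (B *v w) = w" and BA: "B *v (A *v w) = w" for w
    by (simp_all add: matrix_vector_mul_assoc)
  have g': "form_eval d g w = binform d a (B *v w) + b * lin_form (B$3) w ^ d" for w
    using g[of "B *v w"] by (simp add: AB matrix_vector_mult_nth)
  have l: "lin_form (B$3) (A *v e3) = 1"
    using BA[of e3] by (simp add: matrix_vector_mult_nth[symmetric])
  have "form_eval d g (w + s *s (A *v e3)) - form_eval d g w
          = b * (lin_form (B$3) (w + s *s (A *v e3)) ^ d - lin_form (B$3) w ^ d)" for w s
  proof -
    have "binform d a (B *v (w + s *s (A *v e3))) = binform d a (B *v w)"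
      by (rule binform_cong) (simp_all add: matrix_vector_mult_add_smult BA)
    then show ?thesis by (simp add: g' algebra_simps)
  qed
  moreover have "A *v e3 \<noteq> 0" "B$3 \<noteq> 0"
    using l by (auto simp: lin_form_3)
  ultimately show thesis using that by blast
qed

lemma translation_law_normalize:
  assumes "u \<noteq> 0" "l \<noteq> 0"
    and law: "\<And>w s. G (w + s *s u) - G w = \<beta> * (lin_form l (w + s *s u) ^ d - lin_form l w ^ d)"
  obtains u' l' \<beta>' where "norm u' = 1" "norm l' = 1"
    "\<And>w s. G (w + s *s u') - G w = \<beta>' * (lin_form l' (w + s *s u') ^ d - lin_form l' w ^ d)"
proof
  show "norm (of_real (inverse (norm u)) *s u) = 1" "norm (of_real (inverse (norm l)) *s l) = 1"
    by (simp_all only: of_real_smult_eq_scaleR) (use assms in simp_all)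
next
  let ?\<rho> = "of_real (norm l) :: complex" and ?c = "of_real (inverse (norm l)) :: complex"
  have "?\<rho> ^ d * ?c ^ d = 1" using assms(2) by (simp flip: power_mult_distrib of_real_mult)
  then have rescale: "\<beta> * (X ^ d - Y ^ d) = \<beta> * ?\<rho> ^ d * ((?c * X) ^ d - (?c * Y) ^ d)" for X Y
    by (simp add: power_mult_distrib algebra_simps)
  fix w s
  let ?c' = "of_real (inverse (norm u)) :: complex"
  have "G (w + s *s (?c' *s u)) - G w
      = \<beta> * (lin_form l (w + s *s (?c' *s u)) ^ d - lin_form l w ^ d)"
    using law[of w "s * ?c'"] by (simp add: vector_smult_assoc)
  also have "\<dots> = \<beta> * ?\<rho> ^ d * ((?c * lin_form l (w + s *s (?c' *s u))) ^ d - (?c * lin_form l w) ^ d)"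
    by (rule rescale)
  also have "\<dots> = \<beta> * ?\<rho> ^ d * (lin_form (?c *s l) (w + s *s (?c' *s u)) ^ d - lin_form (?c *s l) w ^ d)"
    by (simp add: lin_form_def sum_distrib_left mult.assoc)
  finally show "G (w + s *s (?c' *s u)) - G w
      = \<beta> * ?\<rho> ^ d * (lin_form (?c *s l) (w + s *s (?c' *s u)) ^ d - lin_form (?c *s l) w ^ d)" .
qed

lemma split_form_normalized_translation_law:
  assumes "split_form d g"
  shows "\<exists>u l \<beta>. norm u = 1 \<and> norm l = 1 \<and> (\<forall>w s. form_eval d g (w + s *s u) - form_eval d g w
          = \<beta> * (lin_form l (w + s *s u) ^ d - lin_form l w ^ d))"
proof -
  obtain u l \<beta> where "u \<noteq> 0" "l \<noteq> 0" "\<And>w s. form_eval d g (w + s *s u) - form_eval d g w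
      = \<beta> * (lin_form l (w + s *s u) ^ d - lin_form l w ^ d)"
    using split_form_translation_law[OF assms] by blast
  then show ?thesis by (rule translation_law_normalize) blast
qed

lemma lin_form_surj:
  assumes "l \<noteq> 0"
  obtains w where "lin_form l w = c"
proof -
  consider "l$1 \<noteq> 0" | "l$2 \<noteq> 0" | "l$3 \<noteq> 0" using assms by (auto simp: vec3_eq_iff)
  then show thesis
  proof cases
    case 1 then show thesis by (intro that[of "vector [c / l$1, 0, 0]"]) (simp add: lin_form_3)
  next
    case 2 then show thesis by (intro that[of "vector [0, c / l$2, 0]"]) (simp add: lin_form_3)
  next
    case 3 then show thesis by (intro that[of "vector [0, 0, c / l$3]"]) (simp add: lin_form_3)
  qed
qed

lemma tendsto_lin_form [tendsto_intros]:
  "(l \<longlongrightarrow> L) F \<Longrightarrow> (x \<longlongrightarrow> y) F \<Longrightarrow> ((\<lambda>n. lin_form (l n) (x n)) \<longlongrightarrow> lin_form L y) F"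
  unfolding lin_form_def by (intro tendsto_intros)

lemma tendsto_form_eval:
  assumes "(g \<longlongrightarrow> f) F" "(x \<longlongrightarrow> y) F"
  shows "((\<lambda>n. form_eval d (g n) (x n)) \<longlongrightarrow> form_eval d f y) F"
proof -
  have "((\<lambda>n. g n m) \<longlongrightarrow> f m) F" for m
    using continuous_on_tendsto_compose[OF continuous_on_product_coordinates assms(1)] by simp
  then show ?thesis unfolding form_eval_def using assms(2) by (intro tendsto_intros)
qed

lemma translation_difference_limit:
  fixes g :: "nat \<Rightarrow> nat \<times> nat \<times> nat \<Rightarrow> complex"
  assumes "g \<longlonglongrightarrow> f" "u \<longlonglongrightarrow> U" "l \<longlonglongrightarrow> L" "L \<noteq> 0" "d \<noteq> 0"
    and diff: "\<And>n w s. form_eval d (g n) (w + s *s u n) - form_eval d (g n) w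
                 = \<sigma> n * power_diff_quot d (lin_form (l n) w) s (lin_form (l n) (u n))"
  obtains \<mu> where "\<And>w s. form_eval d f (w + s *s U) - form_eval d f w
                     = \<mu> * power_diff_quot d (lin_form L w) s (lin_form L U)"
proof -
  define Q where "Q = (\<lambda>n w s. power_diff_quot d (lin_form (l n) w) s (lin_form (l n) (u n)))"
  have lim: "(\<lambda>n. \<sigma> n * Q n w s) \<longlonglongrightarrow> form_eval d f (w + s *s U) - form_eval d f w" for w s
    unfolding Q_def diff[symmetric] using assms(1,2) by (intro tendsto_intros tendsto_form_eval)
  have Q: "(\<lambda>n. Q n w s) \<longlonglongrightarrow> power_diff_quot d (lin_form L w) s (lin_form L U)" for w s
    unfolding Q_def using assms(2,3) by (intro tendsto_intros)
  obtain a where a: "power_diff_quot d a 1 (lin_form L U) \<noteq> 0"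
    using power_diff_quot_nonzero[OF assms(5)] by blast
  obtain w where w: "lin_form L w = a"
    using lin_form_surj[OF assms(4)] by blast
  have "\<not> filterlim \<sigma> at_infinity sequentially"
    by (rule not_tendsto_infinity_if_product_tendsto[OF lim[of w 1] Q[of w 1]]) (simp add: a w)
  then obtain r \<mu> where r: "strict_mono r" "(\<sigma> \<circ> r) \<longlonglongrightarrow> \<mu>"
    by (rule not_tendsto_infinity_convergent_subseq)
  have "form_eval d f (w + s *s U) - form_eval d f w = \<mu> * power_diff_quot d (lin_form L w) s (lin_form L U)"
    for w s
  proof (rule LIMSEQ_unique)
    show "(\<lambda>n. \<sigma> (r n) * Q (r n) w s) \<longlonglongrightarrow> form_eval d f (w + s *s U) - form_eval d f w"
      using LIMSEQ_subseq_LIMSEQ[OF lim r(1)] by (simp add: o_def)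
    show "(\<lambda>n. \<sigma> (r n) * Q (r n) w s) \<longlonglongrightarrow> \<mu> * power_diff_quot d (lin_form L w) s (lin_form L U)"
      using r(2) LIMSEQ_subseq_LIMSEQ[OF Q r(1)] by (intro tendsto_mult) (simp_all add: o_def)
  qed
  then show thesis by (rule that)
qed

lemma closure_split_form_imp_split_or_degen:
  assumes "d \<noteq> 0" "f \<in> closure {g. is_form d g \<and> split_form d g}"
  shows "split_form d f \<or> degen_form d f"
proof -
  obtain g where g: "\<And>n. split_form d (g n)" "g \<longlonglongrightarrow> f"
    using assms(2) unfolding closure_sequential by blast
  obtain u l \<beta> where ul: "\<And>n. norm (u n) = 1" "\<And>n. norm (l n) = 1"
    and law: "\<And>n w s. form_eval d (g n) (w + s *s u n) - form_eval d (g n) w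
                 = \<beta> n * (lin_form (l n) (w + s *s u n) ^ d - lin_form (l n) w ^ d)"
    using split_form_normalized_translation_law[OF g(1)] by metis
  have "seq_compact (sphere (0::complex^3) 1 \<times> sphere (0::complex^3) 1)"
    by (intro compact_imp_seq_compact compact_Times compact_sphere)
  then obtain UL r where UL: "UL \<in> sphere 0 1 \<times> sphere 0 1" and r: "strict_mono r"
    and "((\<lambda>n. (u n, l n)) \<circ> r) \<longlonglongrightarrow> UL"
    by (rule seq_compactE) (use ul in auto)
  then have U: "(u \<circ> r) \<longlonglongrightarrow> fst UL" and L: "(l \<circ> r) \<longlonglongrightarrow> snd UL"
    by (auto dest: tendsto_fst tendsto_snd simp: o_def)
  have "fst UL \<noteq> 0" "snd UL \<noteq> 0" using UL by auto
  have diff: "form_eval d ((g \<circ> r) n) (w + s *s (u \<circ> r) n) - form_eval d ((g \<circ> r) n) w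
      = \<beta> (r n) * lin_form (l (r n)) (u (r n))
        * power_diff_quot d (lin_form ((l \<circ> r) n) w) s (lin_form ((l \<circ> r) n) ((u \<circ> r) n))" for n w s
    using law[of "r n" w s] power_diff_quot_mult[of "lin_form (l (r n)) (u (r n))" d "lin_form (l (r n)) w" s]
    by (simp add: lin_form_add lin_form_smult ac_simps)
  obtain \<mu> where "\<And>w s. form_eval d f (w + s *s fst UL) - form_eval d f w
                  = \<mu> * power_diff_quot d (lin_form (snd UL) w) s (lin_form (snd UL) (fst UL))"
    using translation_difference_limit[OF LIMSEQ_subseq_LIMSEQ[OF g(2) r] U L \<open>snd UL \<noteq> 0\<close> assms(1) diff]
    by blast
  then show ?thesis using split_or_degen_if_translation_law[OF assms(1) \<open>fst UL \<noteq> 0\<close>] by blast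
qed

section \<open>Degenerate forms as limits of split forms\<close>

lemma binform_add_power: "binform d a v + c * (v$1) ^ d = binform d (a(d := a d + c)) v"
proof -
  have "binform d (a(d := a d + c)) v
      = (\<Sum>i\<le>d. a i * (v$1) ^ i * (v$2) ^ (d - i) + (if i = d then c * (v$1) ^ d else 0))"
    unfolding binform_def by (rule sum.cong) (auto simp: algebra_simps)
  then show ?thesis by (simp add: sum.distrib binform_def)
qed

lemma split_form_if_power_diff_quot:
  assumes "\<epsilon> \<noteq> 0" "invertible A"
    and g: "\<And>v. form_eval d g (A *v v) = binform d a v + c * power_diff_quot d (v$1) (v$3) \<epsilon>"
  shows "split_form d g"
proof -
  let ?C = "mat3 1 0 0 0 1 0 (-1/\<epsilon>) 0 (1/\<epsilon>)"
  have C: "invertible ?C"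
    by (rule invertibleI_right_inverse[of _ "mat3 1 0 0 0 1 0 1 0 \<epsilon>"])
      (use assms(1) in \<open>simp add: vec3_eq_iff field_simps\<close>)
  have "form_eval d g ((A ** ?C) *v v)
      = binform d (a(d := a d - c / \<epsilon>)) v + c / \<epsilon> * (v$3) ^ d" for v
  proof -
    define y where "y = ?C *v v"
    have y: "y$1 = v$1" "y$2 = v$2" "v$1 + y$3 * \<epsilon> = v$3"
      using assms(1) by (simp_all add: y_def field_simps)
    have "c * power_diff_quot d (y$1) (y$3) \<epsilon> = c / \<epsilon> * (\<epsilon> * power_diff_quot d (y$1) (y$3) \<epsilon>)"
      using assms(1) by simp
    also have "\<dots> = c / \<epsilon> * (v$3) ^ d - c / \<epsilon> * (v$1) ^ d"
      by (simp add: power_diff_quot_mult y right_diff_distrib)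
    finally have "form_eval d g (A *v y) = binform d a v - c / \<epsilon> * (v$1) ^ d + c / \<epsilon> * (v$3) ^ d"
      using binform_cong[of y v d a] by (simp add: g y)
    also have "binform d a v - c / \<epsilon> * (v$1) ^ d = binform d (a(d := a d - c / \<epsilon>)) v"
      using binform_add_power[of d a v "- c / \<epsilon>"] by simp
    finally show ?thesis by (simp add: y_def matrix_vector_mul_assoc)
  qed
  then show ?thesis unfolding split_form_def using invertible_mult[OF assms(2) C] by blast
qed

lemma degen_form_split_deformation:
  assumes "d \<noteq> 0" "is_form d f" "degen_form d f"
  obtains \<phi> :: "complex \<Rightarrow> nat \<times> nat \<times> nat \<Rightarrow> complex"
  where "continuous_on UNIV \<phi>" "\<phi> 0 = f" "\<And>\<epsilon>. is_form d (\<phi> \<epsilon>)"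
    "\<And>\<epsilon>. \<epsilon> \<noteq> 0 \<Longrightarrow> split_form d (\<phi> \<epsilon>)"
proof -
  obtain A a b where A: "invertible A"
    and f: "\<And>v. form_eval d f (A *v v) = binform d a v + b * (v$1) ^ (d - 1) * v$3"
    using assms(3) unfolding degen_form_def by blast
  obtain B where "B ** A = mat 1" using A invertible_left_inverse by blast
  then have BA: "B *v (A *v v) = v" for v by (simp add: matrix_vector_mul_assoc)
  have mono: "form_fun d (\<lambda>w. monomial (d - k, 0, k) (B *v w))" if "k \<in> {2..d}" for k
  proof -
    from that have "(d - k, 0, k) \<in> tmonos d" by (auto simp: tmonos_def)
    then show ?thesis by (rule form_fun_linear_change[OF form_fun_monomial])
  qed
  from form_fun_family_is_form[OF mono] obtain e where e: "\<forall>k\<in>{2..d}. is_form d (e k)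
      \<and> form_eval d (e k) = (\<lambda>w. monomial (d - k, 0, k) (B *v w))"
    by (rule exE)
  txt \<open>In the coordinates of \<open>A\<close>, \<open>\<phi> \<epsilon>\<close> is \<open>\<alpha> + b/(d \<epsilon>) ((x + \<epsilon> z)^d - x^d)\<close>.\<close>
  define \<phi> where
    "\<phi> = (\<lambda>\<epsilon> m. f m + (\<Sum>k=2..d. (b / of_nat d * \<epsilon> ^ (k - 1) * of_nat (d choose k)) * e k m))"
  have "form_eval d (\<phi> \<epsilon>) (A *v v) = binform d a v + b / of_nat d * power_diff_quot d (v$1) (v$3) \<epsilon>"
    for \<epsilon> v
  proof -
    have "form_eval d (\<phi> \<epsilon>) (A *v v) = form_eval d f (A *v v)
        + (\<Sum>k=2..d. (b / of_nat d * \<epsilon> ^ (k - 1) * of_nat (d choose k)) * form_eval d (e k) (A *v v))"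
      by (simp only: \<phi>_def form_eval_add form_eval_sum[OF finite_atLeastAtMost] form_eval_cmult)
    also have "\<dots> = binform d a v + b / of_nat d * (of_nat d * (v$1) ^ (d - 1) * v$3
        + (\<Sum>k=2..d. \<epsilon> ^ (k - 1) * (of_nat (d choose k) * (v$1) ^ (d - k) * (v$3) ^ k)))"
      using assms(1) e by (simp add: f BA sum_distrib_left algebra_simps)
    finally show ?thesis by (simp only: power_diff_quot_split[OF assms(1)])
  qed
  show thesis
  proof
    show "continuous_on UNIV \<phi>"
      unfolding \<phi>_def by (intro continuous_on_coordinatewise_then_product continuous_intros)
    show "\<phi> 0 = f" by (simp add: \<phi>_def fun_eq_iff zero_power)
    show "is_form d (\<phi> \<epsilon>)" for \<epsilon> using assms(2) e by (simp add: is_form_def \<phi>_def)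
    show "split_form d (\<phi> \<epsilon>)" if "\<epsilon> \<noteq> 0" for \<epsilon>
      by (rule split_form_if_power_diff_quot[OF that A]) fact
  qed
qed

lemma degen_form_in_closure:
  assumes "is_form d f" "degen_form d f"
  shows "f \<in> closure {g. is_form d g \<and> split_form d g}"
proof (cases "d = 0")
  case True
  then show ?thesis
    using assms(1) split_form_degree_0 by (intro closure_subset[THEN subsetD]) simp
next
  case False
  then obtain \<phi> :: "complex \<Rightarrow> nat \<times> nat \<times> nat \<Rightarrow> complex"
    where "continuous_on UNIV \<phi>" "\<phi> 0 = f" "\<And>\<epsilon>. is_form d (\<phi> \<epsilon>)"
      "\<And>\<epsilon>. \<epsilon> \<noteq> 0 \<Longrightarrow> split_form d (\<phi> \<epsilon>)"
    using degen_form_split_deformation assms by blast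
  then show ?thesis using closure_if_continuous_punctured[of \<phi> 0] by auto
qed

theorem lemma7p1:
  fixes d :: nat and f :: "nat \<times> nat \<times> nat \<Rightarrow> complex"
  assumes "is_form d f"
  shows "f \<in> closure {g. is_form d g \<and> split_form d g} \<longleftrightarrow> split_form d f \<or> degen_form d f"
proof
  assume "f \<in> closure {g. is_form d g \<and> split_form d g}"
  then show "split_form d f \<or> degen_form d f"
    using closure_split_form_imp_split_or_degen split_form_degree_0 by (cases "d = 0") auto
next
  assume "split_form d f \<or> degen_form d f"
  then show "f \<in> closure {g. is_form d g \<and> split_form d g}"
  proof
    assume "split_form d f"
    with assms show ?thesis by (intro closure_subset[THEN subsetD]) simp
  next
    assume "degen_form d f"
    with assms show ?thesis by (rule degen_form_in_closure)
  qed
qed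

end
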